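(* For every $\alpha\in[0,1]$ there exists a set $G_\alpha\subset[1,2]$ such that $\dim_{\mathrm M}G_\alpha=0$ and $\dim_{\mathrm A}G_\alpha=\alpha$.
   Context: $N(E,\delta)$ is the minimal number of intervals of length $\delta$ covering $E$. $\dim_{\mathrm M}E=\inf\{a>0:\exists c>0\ \forall\delta\in(0,1),\ N(E,\delta)\le c\delta^{-a}\}$. $\dim_{\mathrm A}E=\inf\{a>0:\exists c>0\text{ such that for all subintervals }I\subset[1,2]\text{ and all }\delta\in(0,|I|),\ N(E\cap I,\delta)\le c\delta^{-a}|I|^a\}$. *)

theory Defs
  imports Complex_Main
begin

definition cover_num :: "real set \<Rightarrow> real \<Rightarrow> nat" where
  "cover_num E \<delta> = (LEAST n. \<exists>S. finite S \<and> card S = n \<and> E \<subseteq> (\<Union>x\<in>S. {x..x+\<delta>}))"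

definition dim_M :: "real set \<Rightarrow> real" where
  "dim_M E = Inf {a. a > 0 \<and> (\<exists>c>0. \<forall>\<delta>. 0 < \<delta> \<and> \<delta> < 1 \<longrightarrow>
       real (cover_num E \<delta>) \<le> c * \<delta> powr (-a))}"

definition dim_A :: "real set \<Rightarrow> real" where
  "dim_A E = Inf {a. a > 0 \<and> (\<exists>c>0. \<forall>u v \<delta>. 1 \<le> u \<and> u < v \<and> v \<le> 2 \<and> 0 < \<delta> \<and> \<delta> < v - u \<longrightarrow>
       real (cover_num (E \<inter> {u..v}) \<delta>) \<le> c * \<delta> powr (-a) * (v - u) powr a)}"

end

theory Submission
  imports Defs "HOL-Library.Set_Algebras"
begin

(* G_alpha is a union of blocks B_k accumulating at 1.  The block B_k is a copy, scaled by
   e_k = 2^-(k + 2^(k+3)) and placed at 1 + 2^-(k+1), of the set of integers below 2^k whose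
   binary digits vanish except at the positions i where floor (i alpha) jumps.  At all scales
   between e_k and e_k 2^k it looks like an alpha-dimensional Cantor set: it consists of
   2^floor(k alpha) points at spacing e_k inside an interval of length e_k 2^k, which forces
   dim_A >= alpha, while an interval of length R meets it in a set coverable by O((R/delta)^alpha)
   intervals of length delta.  Such an interval meets only O(log (R/delta)) blocks that are not
   already contained in [1, 1 + delta], whence dim_A <= alpha.  As e_k decreases
   super-exponentially, at scale delta each of the O(log (1/delta)) relevant blocks needs either
   one interval or at most 2^k <= log (1/delta) of them; so N(G_alpha, delta) = O(log^2 (1/delta))
   and dim_M G_alpha = 0. *)

lemma floor_mult_mono: "0 \<le> a \<Longrightarrow> m \<le> n \<Longrightarrow> \<lfloor>real m * a\<rfloor> \<le> \<lfloor>real n * a\<rfloor>"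
  by (intro floor_mono mult_right_mono) auto

lemma floor_mult_Suc_le: "a \<le> 1 \<Longrightarrow> \<lfloor>real (Suc n) * a\<rfloor> \<le> \<lfloor>real n * a\<rfloor> + 1"
proof -
  assume "a \<le> 1"
  then have "real (Suc n) * a \<le> real n * a + of_int 1" by (simp add: algebra_simps)
  then show ?thesis unfolding floor_add_int by (rule floor_mono)
qed

lemma exists_power_of_two_bracket:
  fixes x :: real
  assumes "1 \<le> x"
  shows "\<exists>m::nat. 2 ^ m \<le> x \<and> x < 2 ^ (m + 1)"
proof -
  define m where "m = nat \<lfloor>log 2 x\<rfloor>"
  have "\<lfloor>log 2 x\<rfloor> = int m" using assms by (simp add: m_def)
  then have "2 powr real m \<le> x \<and> x < 2 powr (real m + 1)"
    using floor_log_eq_powr_iff[of x 2 "int m"] assms by simp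
  then show ?thesis by (auto simp: powr_add powr_realpow)
qed

lemma less_log2_if_power_less: "0 < \<delta> \<Longrightarrow> 2 ^ n < 1 / \<delta> \<Longrightarrow> real n < log 2 (1 / \<delta>)"
  by (simp add: less_log_iff powr_realpow)

lemma powr_le_mult_powr:
  fixes a c x y :: real
  assumes "0 \<le> a" "a \<le> 1" "1 \<le> c" "0 \<le> x" "0 \<le> y" "x \<le> c * y"
  shows "x powr a \<le> c * y powr a"
proof -
  have "x powr a \<le> (c * y) powr a" using assms by (intro powr_mono2) auto
  also have "\<dots> = c powr a * y powr a" using assms by (simp add: powr_mult)
  also have "\<dots> \<le> c * y powr a"
    using powr_mono[of a 1 c] assms by (intro mult_right_mono) auto
  finally show ?thesis .
qed

lemma one_plus_square_le_exp:
  fixes \<beta> L :: real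
  assumes "0 < \<beta>" "0 \<le> L"
  shows "1 + (1 + L) ^ 2 \<le> (1 + 1 / (min 1 (\<beta> / 2)) ^ 2) * exp (\<beta> * L)"
proof -
  define \<mu> where "\<mu> = min 1 (\<beta> / 2)"
  have \<mu>: "0 < \<mu>" "\<mu> \<le> 1" "\<mu> \<le> \<beta> / 2" using assms(1) by (auto simp: \<mu>_def)
  have "\<mu> * (1 + L) \<le> 1 + \<beta> / 2 * L"
    using \<mu> assms(2) mult_right_mono[OF \<mu>(3) assms(2)] by (simp add: algebra_simps)
  also have "\<dots> \<le> exp (\<beta> / 2 * L)" by (rule exp_ge_add_one_self)
  finally have "(\<mu> * (1 + L)) ^ 2 \<le> exp (\<beta> / 2 * L) ^ 2"
    using \<mu> assms(2) by (intro power_mono) auto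
  also have "\<dots> = exp (\<beta> * L)" by (simp add: power2_eq_square flip: exp_add)
  finally have "\<mu> ^ 2 * (1 + L) ^ 2 \<le> exp (\<beta> * L)" by (simp add: power_mult_distrib)
  then have "(1 + L) ^ 2 \<le> exp (\<beta> * L) / \<mu> ^ 2"
    using \<mu>(1) by (simp add: pos_le_divide_eq mult.commute)
  moreover have "1 \<le> exp (\<beta> * L)" using assms by simp
  ultimately have "1 + (1 + L) ^ 2 \<le> exp (\<beta> * L) + exp (\<beta> * L) / \<mu> ^ 2" by linarith
  then show ?thesis unfolding \<mu>_def[symmetric] by (simp add: algebra_simps)
qed

lemma real_le_powr_if_power_le:
  fixes b c x :: real
  assumes "0 < b" "0 < c" "1 \<le> x" "2 ^ (n - 1) \<le> c * x"
  shows "real n \<le> (1 + c powr b / (b * ln 2)) * x powr b"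
proof -
  have "real (n - 1) * b * ln 2 < exp (real (n - 1) * b * ln 2)"
    using exp_ge_add_one_self[of "real (n - 1) * b * ln 2"] by linarith
  also have "\<dots> = (2 ^ (n - 1)) powr b"
    by (simp add: powr_def ln_realpow mult_ac)
  also have "\<dots> \<le> (c * x) powr b" using assms by (intro powr_mono2) auto
  also have "\<dots> = c powr b * x powr b" using assms by (simp add: powr_mult)
  finally have "real (n - 1) * b * ln 2 < c powr b * x powr b" .
  moreover have "0 < b * ln 2" using assms(1) by simp
  ultimately have "real (n - 1) \<le> c powr b * x powr b / (b * ln 2)"
    by (simp add: field_simps)
  moreover have "1 \<le> x powr b" using assms by (intro ge_one_powr_ge_zero) auto
  ultimately show ?thesis by (simp add: field_simps)
qed

lemma Inf_eq_if_greaterThan_subset: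
  fixes \<alpha> :: real
  assumes "{\<alpha><..} \<subseteq> S" "S \<subseteq> {\<alpha>..}"
  shows "Inf S = \<alpha>"
proof (rule antisym)
  have "bdd_below S" using assms(2) by (meson bdd_below_Ici bdd_below_mono)
  then show "Inf S \<le> \<alpha>" using cInf_superset_mono[OF _ _ assms(1)] by simp
  have "S \<noteq> {}" using assms(1) by (metis greaterThan_iff less_add_one subsetD empty_iff)
  then show "\<alpha> \<le> Inf S" using cInf_superset_mono[OF _ _ assms(2)] by simp
qed

section \<open>Covering numbers\<close>

definition covers :: "real set \<Rightarrow> real \<Rightarrow> real set \<Rightarrow> bool" where
  "covers E \<delta> S \<longleftrightarrow> finite S \<and> E \<subseteq> (\<Union>x\<in>S. {x..x + \<delta>})"

lemma cover_num_le_card: "covers E \<delta> S \<Longrightarrow> cover_num E \<delta> \<le> card S"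
  unfolding cover_num_def covers_def by (rule Least_le) blast

lemma cover_num_attained:
  assumes "covers E \<delta> S0"
  obtains S where "covers E \<delta> S" "card S = cover_num E \<delta>"
proof -
  let ?P = "\<lambda>n. \<exists>S. finite S \<and> card S = n \<and> E \<subseteq> (\<Union>x\<in>S. {x..x + \<delta>})"
  have "?P (card S0)" using assms unfolding covers_def by blast
  then have "?P (Least ?P)" by (rule LeastI)
  then show ?thesis using that unfolding covers_def cover_num_def by blast
qed

lemma covers_interval:
  assumes "E \<subseteq> {lo..hi}" "\<delta> > 0"
  shows "covers E \<delta> ((\<lambda>i. lo + real i * \<delta>) ` {..nat \<lceil>(hi - lo) / \<delta>\<rceil>})"
  unfolding covers_def
proof (intro conjI subsetI)
  fix x assume "x \<in> E"
  then have x: "lo \<le> x" "x \<le> hi" using assms by auto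
  define i where "i = nat \<lfloor>(x - lo) / \<delta>\<rfloor>"
  have "real i = \<lfloor>(x - lo) / \<delta>\<rfloor>" using x assms unfolding i_def by simp
  then have "real i \<le> (x - lo) / \<delta>" "(x - lo) / \<delta> < real i + 1"
    by linarith+
  then have "lo + real i * \<delta> \<le> x" "x \<le> lo + real i * \<delta> + \<delta>"
    using assms(2) by (simp_all add: field_simps)
  moreover have "(x - lo) / \<delta> \<le> (hi - lo) / \<delta>"
    using x assms(2) by (simp add: divide_right_mono)
  then have "\<lfloor>(x - lo) / \<delta>\<rfloor> \<le> \<lceil>(hi - lo) / \<delta>\<rceil>"
    by (rule order_trans[OF floor_le_ceiling ceiling_mono])
  then have "i \<le> nat \<lceil>(hi - lo) / \<delta>\<rceil>" unfolding i_def by (rule nat_mono)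
  ultimately show "x \<in> (\<Union>x\<in>(\<lambda>i. lo + real i * \<delta>) ` {..nat \<lceil>(hi - lo) / \<delta>\<rceil>}. {x..x + \<delta>})"
    by auto
qed simp

lemma card_le_cover_num_if_separated:
  assumes "A \<subseteq> E" "E \<subseteq> {lo..hi}" "\<delta> > 0"
    and separated: "\<And>x y. x \<in> A \<Longrightarrow> y \<in> A \<Longrightarrow> x \<noteq> y \<Longrightarrow> \<delta> < \<bar>x - y\<bar>"
  shows "card A \<le> cover_num E \<delta>"
proof -
  obtain S where S: "covers E \<delta> S" "card S = cover_num E \<delta>"
    using cover_num_attained covers_interval[OF assms(2,3)] by metis
  then have "\<forall>x\<in>A. \<exists>s\<in>S. s \<le> x \<and> x \<le> s + \<delta>" using assms(1) unfolding covers_def by fastforce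
  then obtain f where f: "\<forall>x\<in>A. f x \<in> S \<and> f x \<le> x \<and> x \<le> f x + \<delta>" by metis
  have "inj_on f A"
  proof
    fix x y assume xy: "x \<in> A" "y \<in> A" "f x = f y"
    have "f x \<le> x" "x \<le> f x + \<delta>" "f y \<le> y" "y \<le> f y + \<delta>"
      using f xy(1,2) by auto
    then have "\<bar>x - y\<bar> \<le> \<delta>" using xy(3) by (intro abs_leI) linarith+
    then show "x = y" using separated[OF xy(1,2)] by (meson not_less)
  qed
  then have "card A \<le> card S" using f S(1) unfolding covers_def by (auto intro: card_inj_on_le)
  then show ?thesis using S(2) by simp
qed

lemma cover_num_Union_le:
  assumes "finite K" "E \<subseteq> {x0..x0 + \<delta>} \<union> (\<Union>k\<in>K. A k)"
    and "\<And>k. k \<in> K \<Longrightarrow> \<exists>S. covers (A k) \<delta> S \<and> real (card S) \<le> B"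
  shows "real (cover_num E \<delta>) \<le> 1 + real (card K) * B"
proof -
  obtain F where F: "\<And>k. k \<in> K \<Longrightarrow> covers (A k) \<delta> (F k) \<and> real (card (F k)) \<le> B"
    using assms(3) by metis
  have fin: "finite (\<Union>k\<in>K. F k)" using assms(1) F unfolding covers_def by blast
  have "covers E \<delta> (insert x0 (\<Union>k\<in>K. F k))"
    unfolding covers_def
  proof (intro conjI subsetI)
    fix x assume "x \<in> E"
    then consider "x \<in> {x0..x0 + \<delta>}" | k where "k \<in> K" "x \<in> A k" using assms(2) by blast
    then show "x \<in> (\<Union>s\<in>insert x0 (\<Union>k\<in>K. F k). {s..s + \<delta>})"
    proof cases
      case 2
      then show ?thesis using F unfolding covers_def by blast
    qed blast
  qed (use fin in simp)
  then have "real (cover_num E \<delta>) \<le> real (card (insert x0 (\<Union>k\<in>K. F k)))"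
    by (simp add: cover_num_le_card)
  also have "\<dots> \<le> real (1 + (\<Sum>k\<in>K. card (F k)))"
  proof -
    have "card (insert x0 (\<Union>k\<in>K. F k)) \<le> Suc (card (\<Union>k\<in>K. F k))"
      by (simp add: card_insert_if fin)
    then show ?thesis using card_UN_le[OF assms(1), of F] by (simp only: of_nat_le_iff)
  qed
  also have "\<dots> \<le> 1 + real (card K) * B"
    using sum_bounded_above[of K "\<lambda>k. real (card (F k))" B] F by simp
  finally show ?thesis .
qed

definition box_counting_bound :: "real set \<Rightarrow> real \<Rightarrow> bool" where
  "box_counting_bound E a \<longleftrightarrow>
    (\<exists>c>0. \<forall>\<delta>. 0 < \<delta> \<and> \<delta> < 1 \<longrightarrow> real (cover_num E \<delta>) \<le> c * \<delta> powr (-a))"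

definition assouad_bound :: "real set \<Rightarrow> real \<Rightarrow> bool" where
  "assouad_bound E a \<longleftrightarrow> (\<exists>c>0. \<forall>u v \<delta>. 1 \<le> u \<and> u < v \<and> v \<le> 2 \<and> 0 < \<delta> \<and> \<delta> < v - u \<longrightarrow>
    real (cover_num (E \<inter> {u..v}) \<delta>) \<le> c * \<delta> powr (-a) * (v - u) powr a)"

lemma dim_M_eq_Inf: "dim_M E = Inf {a. 0 < a \<and> box_counting_bound E a}"
  by (simp add: dim_M_def box_counting_bound_def)

lemma dim_A_eq_Inf: "dim_A E = Inf {a. 0 < a \<and> assouad_bound E a}"
  by (simp add: dim_A_def assouad_bound_def)

section \<open>Sets of binary digits\<close>

(* The integers below 2^n whose binary digits vanish except at the positions i in [m, n) where
   floor (i a) jumps; there are floor (n a) - floor (m a) such positions. *)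
fun digit_set :: "real \<Rightarrow> nat \<Rightarrow> nat \<Rightarrow> nat set" where
  "digit_set a m 0 = {0}"
| "digit_set a m (Suc n) =
     (if m \<le> n \<and> \<lfloor>real n * a\<rfloor> < \<lfloor>real (Suc n) * a\<rfloor>
      then digit_set a m n \<union> (+) (2 ^ n) ` digit_set a m n else digit_set a m n)"

lemma digit_set_trivial: "n \<le> m \<Longrightarrow> digit_set a m n = {0}"
  by (induction n) auto

lemma finite_digit_set: "finite (digit_set a m n)"
  by (induction n) auto

lemma digit_set_less_power: "z \<in> digit_set a m n \<Longrightarrow> z < 2 ^ n"
proof (induction n arbitrary: z)
  case (Suc n)
  then show ?case by (auto split: if_splits dest!: Suc.IH)
qed simp

lemma digit_set_le_power_minus_one: "z \<in> digit_set a m n \<Longrightarrow> real z \<le> 2 ^ n - 1"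
proof -
  assume "z \<in> digit_set a m n"
  then have "z + 1 \<le> 2 ^ n" using digit_set_less_power by (simp add: Suc_le_eq)
  then have "real (z + 1) \<le> 2 ^ n" by (metis of_nat_le_iff of_nat_numeral of_nat_power)
  then show ?thesis by simp
qed

lemma power_dvd_digit_set: "z \<in> digit_set a m n \<Longrightarrow> (2::nat) ^ m dvd z"
proof (induction n arbitrary: z)
  case (Suc n)
  then show ?case by (auto split: if_splits simp: le_imp_power_dvd)
qed simp

lemma card_digit_set:
  assumes "0 \<le> a" "a \<le> 1" "m \<le> n"
  shows "card (digit_set a m n) = 2 ^ nat (\<lfloor>real n * a\<rfloor> - \<lfloor>real m * a\<rfloor>)"
  using assms(3)
proof (induction n rule: dec_induct)
  case base
  then show ?case by (simp add: digit_set_trivial)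
next
  case (step n)
  let ?D = "digit_set a m n"
  have mono: "\<lfloor>real m * a\<rfloor> \<le> \<lfloor>real n * a\<rfloor>" "\<lfloor>real n * a\<rfloor> \<le> \<lfloor>real (Suc n) * a\<rfloor>"
    using step.hyps assms(1) by (auto intro!: floor_mult_mono simp del: of_nat_Suc)
  show ?case
  proof (cases "\<lfloor>real n * a\<rfloor> < \<lfloor>real (Suc n) * a\<rfloor>")
    case True
    then have "\<lfloor>real (Suc n) * a\<rfloor> = \<lfloor>real n * a\<rfloor> + 1"
      using floor_mult_Suc_le[OF assms(2), of n] by linarith
    then have "nat (\<lfloor>real (Suc n) * a\<rfloor> - \<lfloor>real m * a\<rfloor>) = Suc (nat (\<lfloor>real n * a\<rfloor> - \<lfloor>real m * a\<rfloor>))"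
      using mono by (simp del: of_nat_Suc)
    moreover have "?D \<inter> (+) (2 ^ n) ` ?D = {}" using digit_set_less_power by fastforce
    ultimately show ?thesis
      using True step by (simp add: card_Un_disjoint finite_digit_set card_image del: of_nat_Suc)
  next
    case False
    then show ?thesis using step mono by (simp del: of_nat_Suc)
  qed
qed

lemma digit_set_split:
  assumes "l \<le> m" "m \<le> n"
  shows "digit_set a l n = digit_set a l m + digit_set a m n"
  using assms(2)
proof (induction n rule: dec_induct)
  case base
  then show ?case by (simp add: digit_set_trivial)
next
  case (step n)
  have "A + (+) c ` B = (+) c ` (A + B)" for A B and c :: nat
    by (auto simp: set_plus_def image_iff) (metis add.left_commute)+
  then show ?case
    using assms step by (simp add: set_plus_Un del: of_nat_Suc)
qed

lemma card_multiples_in_window_le_two: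
  fixes w :: real
  assumes "\<And>h. h \<in> H \<Longrightarrow> (2::nat) ^ p dvd h \<and> w - 2 ^ p < real h \<and> real h \<le> w + 2 ^ p"
  shows "card H \<le> 2"
proof -
  define f where "f = \<lfloor>w / 2 ^ p\<rfloor>"
  define g where "g h = int (h div 2 ^ p)" for h :: nat
  have "inj_on g H"
  proof
    fix x y assume "x \<in> H" "y \<in> H" "g x = g y"
    then show "x = y"
      using assms[of x] assms[of y] unfolding g_def by (metis dvd_div_mult_self of_nat_eq_iff)
  qed
  moreover have "g ` H \<subseteq> {f, f + 1}"
  proof
    fix k assume "k \<in> g ` H"
    then obtain h where h: "h \<in> H" "k = g h" by auto
    have "real h = 2 ^ p * real (h div 2 ^ p)"
      using assms[OF h(1)] by (metis dvd_mult_div_cancel of_nat_mult of_nat_numeral of_nat_power)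
    then have "w / 2 ^ p - 1 < real (h div 2 ^ p)" "real (h div 2 ^ p) \<le> w / 2 ^ p + 1"
      using assms[OF h(1)] by (simp_all add: field_simps)
    moreover have "real_of_int f \<le> w / 2 ^ p" "w / 2 ^ p < real_of_int f + 1"
      unfolding f_def by linarith+
    ultimately show "k \<in> {f, f + 1}" using h(2) unfolding g_def by auto
  qed
  ultimately have "card H \<le> card {f, f + 1}"
    by (metis card_image card_mono finite.emptyI finite.insertI)
  then show ?thesis by (simp add: card_insert_if)
qed

lemma card_digit_set_window:
  fixes w :: real
  assumes "0 \<le> a" "a \<le> 1" "m \<le> n" "m \<le> p"
  shows "card {z \<in> digit_set a m n. w \<le> real z \<and> real z \<le> w + 2 ^ p}
    \<le> 2 * 2 ^ nat (\<lfloor>real p * a\<rfloor> - \<lfloor>real m * a\<rfloor>)"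
proof (cases "n \<le> p")
  case True
  have "card {z \<in> digit_set a m n. w \<le> real z \<and> real z \<le> w + 2 ^ p} \<le> card (digit_set a m n)"
    by (rule card_mono) (auto simp: finite_digit_set)
  also have "\<dots> = 2 ^ nat (\<lfloor>real n * a\<rfloor> - \<lfloor>real m * a\<rfloor>)"
    using assms by (simp add: card_digit_set)
  also have "\<dots> \<le> 2 ^ nat (\<lfloor>real p * a\<rfloor> - \<lfloor>real m * a\<rfloor>)"
    using floor_mult_mono[OF assms(1) True] by (intro power_increasing) auto
  finally show ?thesis by simp
next
  case False
  define H where "H = {h \<in> digit_set a p n. w - 2 ^ p < real h \<and> real h \<le> w + 2 ^ p}"
  have window: "{z \<in> digit_set a m n. w \<le> real z \<and> real z \<le> w + 2 ^ p} \<subseteq> digit_set a m p + H"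
  proof
    fix x assume x: "x \<in> {z \<in> digit_set a m n. w \<le> real z \<and> real z \<le> w + 2 ^ p}"
    then obtain y h where yh: "y \<in> digit_set a m p" "h \<in> digit_set a p n" "x = y + h"
      using digit_set_split[of m p n a] assms False by (auto elim: set_plus_elim)
    have "real y \<le> 2 ^ p - 1" using yh(1) by (rule digit_set_le_power_minus_one)
    then have "h \<in> H" using x yh unfolding H_def by auto
    then show "x \<in> digit_set a m p + H" using yh by auto
  qed
  have fin: "finite H" unfolding H_def by (rule finite_subset[OF _ finite_digit_set]) blast
  have "card {z \<in> digit_set a m n. w \<le> real z \<and> real z \<le> w + 2 ^ p} \<le> card (digit_set a m p + H)"
    using window by (intro card_mono finite_set_plus fin finite_digit_set)
  also have "\<dots> \<le> card (digit_set a m p \<times> H)"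
    unfolding set_plus_image by (rule card_image_le) (simp add: finite_digit_set fin)
  also have "\<dots> = card (digit_set a m p) * card H" by (rule card_cartesian_product)
  also have "\<dots> \<le> card (digit_set a m p) * 2"
    by (intro mult_left_mono card_multiples_in_window_le_two[of H p w])
      (auto simp: H_def power_dvd_digit_set)
  finally show ?thesis using assms by (simp add: card_digit_set)
qed

lemma power_floor_diff_le:
  assumes "0 \<le> a" "m \<le> p"
  shows "real (2 ^ nat (\<lfloor>real p * a\<rfloor> - \<lfloor>real m * a\<rfloor>)) \<le> 2 * (2 ^ (p - m)) powr a"
proof -
  define k where "k = nat (\<lfloor>real p * a\<rfloor> - \<lfloor>real m * a\<rfloor>)"
  have "real k \<le> real (p - m) * a + 1"
    using assms floor_mult_mono[OF assms] by (simp add: k_def of_nat_diff algebra_simps) linarith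
  then have "real (2 ^ k) \<le> 2 powr (real (p - m) * a + 1)"
    by (simp add: powr_realpow[symmetric])
  also have "\<dots> = 2 * (2 ^ (p - m)) powr a"
    by (simp add: powr_add powr_powr powr_realpow[symmetric] mult.commute)
  finally show ?thesis unfolding k_def .
qed

definition scaled_digit_set :: "real \<Rightarrow> real \<Rightarrow> real \<Rightarrow> nat \<Rightarrow> real set" where
  "scaled_digit_set a t e n = (\<lambda>z. t + e * real z) ` digit_set a 0 n"

lemma scaled_digit_set_subset:
  "0 \<le> e \<Longrightarrow> scaled_digit_set a t e n \<subseteq> {t..t + e * (2 ^ n - 1)}"
  unfolding scaled_digit_set_def
  by (auto intro!: mult_left_mono digit_set_le_power_minus_one)

lemma scaled_digit_set_cover_digits:
  assumes a: "0 \<le> a" "a \<le> 1" and "e > 0" "m \<le> n" "m \<le> p"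
    and "e * 2 ^ m \<le> \<delta> + e" "v - u + \<delta> \<le> e * 2 ^ p"
  shows "\<exists>S. covers (scaled_digit_set a t e n \<inter> {u..v}) \<delta> S
    \<and> card S \<le> 2 * 2 ^ nat (\<lfloor>real p * a\<rfloor> - \<lfloor>real m * a\<rfloor>)"
proof -
  define w where "w = (u - t) / e - (2 ^ m - 1)"
  define Z where "Z = {z \<in> digit_set a m n. w \<le> real z \<and> real z \<le> w + 2 ^ p}"
  have "covers (scaled_digit_set a t e n \<inter> {u..v}) \<delta> ((\<lambda>z. t + e * real z) ` Z)"
    unfolding covers_def
  proof (intro conjI subsetI)
    fix x assume "x \<in> scaled_digit_set a t e n \<inter> {u..v}"
    then obtain y z where yz: "y \<in> digit_set a 0 m" "z \<in> digit_set a m n"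
      and x: "x = t + e * real y + e * real z" "u \<le> x" "x \<le> v"
      unfolding scaled_digit_set_def using digit_set_split[of 0 m n a] assms(4)
      by (auto elim!: set_plus_elim simp: algebra_simps)
    have ey: "0 \<le> e * real y" "e * real y \<le> e * (2 ^ m - 1)"
      using assms(3) digit_set_le_power_minus_one[OF yz(1)] by simp_all
    have "e * w = u - t - e * (2 ^ m - 1)" using assms(3) by (simp add: w_def field_simps)
    then have "e * w \<le> e * real z" "e * real z \<le> e * (w + 2 ^ p)"
      using ey x assms(6,7) by (simp_all add: algebra_simps)
    then have "z \<in> Z" using yz(2) assms(3) by (simp add: Z_def)
    moreover have "e * real y \<le> \<delta>" using ey(2) assms(6) by (simp add: right_diff_distrib)
    then have "x \<in> {t + e * real z..t + e * real z + \<delta>}" using ey(1) x by auto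
    ultimately show "x \<in> (\<Union>s\<in>(\<lambda>z. t + e * real z) ` Z. {s..s + \<delta>})" by blast
  qed (simp add: Z_def finite_digit_set)
  moreover have "card ((\<lambda>z. t + e * real z) ` Z) \<le> card Z"
    by (simp add: card_image_le finite_digit_set Z_def)
  moreover have "card Z \<le> 2 * 2 ^ nat (\<lfloor>real p * a\<rfloor> - \<lfloor>real m * a\<rfloor>)"
    unfolding Z_def using a assms(4,5) by (rule card_digit_set_window)
  ultimately show ?thesis by (intro exI[of _ "(\<lambda>z. t + e * real z) ` Z"]) simp
qed

(* Digits below position m, with e 2^m about delta, move a point by at most delta; on an interval
   of length R the digits from position p, with 2^(p - m) about R/delta, take at most two values.
   So the cover is indexed by the digits in [m, p), with about (R/delta)^a choices for them. *)
lemma scaled_digit_set_cover: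
  assumes a: "0 \<le> a" "a \<le> 1" and e: "e > 0" and \<delta>: "0 < \<delta>" "\<delta> < v - u"
  shows "\<exists>S. covers (scaled_digit_set a t e n \<inter> {u..v}) \<delta> S
    \<and> real (card S) \<le> 32 * ((v - u) / \<delta>) powr a"
proof -
  define R where "R = v - u"
  have R: "\<delta> < R" "1 \<le> (R / \<delta>) powr a"
    using \<delta> a by (auto simp: R_def intro: ge_one_powr_ge_zero)
  obtain m :: nat where m: "2 ^ m \<le> \<delta> / e + 1" "\<delta> / e + 1 < 2 ^ (m + 1)"
    using exists_power_of_two_bracket[of "\<delta> / e + 1"] \<delta> e by auto
  have em: "e * 2 ^ m \<le> \<delta> + e" "\<delta> < e * 2 ^ (m + 1)"
    using m e by (simp_all add: field_simps)
  show ?thesis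
  proof (cases "n \<le> m")
    case True
    then have "e * (2 ^ n - 1) \<le> e * (2 ^ m - 1)"
      using e by (intro mult_left_mono) (auto intro: power_increasing)
    then have "{t..t + e * (2 ^ n - 1)} \<subseteq> {t..t + \<delta>}"
      using em(1) by (simp add: right_diff_distrib)
    then have "covers (scaled_digit_set a t e n \<inter> {u..v}) \<delta> {t}"
      using scaled_digit_set_subset[of e a t n] e unfolding covers_def by auto
    then show ?thesis using R by (intro exI[of _ "{t}"]) (simp add: R_def)
  next
    case False
    obtain q :: nat where q: "2 ^ q \<le> 4 * R / \<delta>" "4 * R / \<delta> < 2 ^ (q + 1)"
      using exists_power_of_two_bracket[of "4 * R / \<delta>"] \<delta> R by (auto simp: field_simps)
    define p where "p = m + q + 1"
    have "\<delta> * 2 ^ q \<le> e * 2 ^ (m + 1) * 2 ^ q" using em(2) by (intro mult_right_mono) auto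
    also have "\<dots> = e * 2 ^ p" by (simp add: p_def power_add mult_ac)
    finally have "\<delta> * 2 ^ q \<le> e * 2 ^ p" .
    moreover have "2 * R < \<delta> * 2 ^ q" using q(2) \<delta> by (simp add: field_simps)
    ultimately have "v - u + \<delta> \<le> e * 2 ^ p" using R(1) R_def by linarith
    moreover have "m \<le> n" "m \<le> p" using False by (simp_all add: p_def)
    ultimately obtain S where S: "covers (scaled_digit_set a t e n \<inter> {u..v}) \<delta> S"
      "card S \<le> 2 * 2 ^ nat (\<lfloor>real p * a\<rfloor> - \<lfloor>real m * a\<rfloor>)"
      using scaled_digit_set_cover_digits[OF a e _ _ em(1)] by blast
    have "(2::real) ^ (p - m) \<le> 8 * (R / \<delta>)" using q(1) by (simp add: p_def)
    then have "(2 ^ (p - m)) powr a \<le> 8 * (R / \<delta>) powr a"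
      using a \<delta> R by (intro powr_le_mult_powr) auto
    moreover have "real (card S) \<le> 2 * real (2 ^ nat (\<lfloor>real p * a\<rfloor> - \<lfloor>real m * a\<rfloor>))"
      using of_nat_mono[OF S(2)] by simp
    then have "real (card S) \<le> 4 * (2 ^ (p - m)) powr a"
      using power_floor_diff_le[OF a(1) \<open>m \<le> p\<close>] by linarith
    ultimately show ?thesis using S(1) by (intro exI[of _ S]) (simp add: R_def)
  qed
qed

section \<open>The set G\<close>

definition block_pos :: "nat \<Rightarrow> real" where
  "block_pos k = (1 / 2) ^ (k + 1)"

definition block_step :: "nat \<Rightarrow> real" where
  "block_step k = (1 / 2) ^ (k + 2 ^ (k + 3))"

definition block :: "real \<Rightarrow> nat \<Rightarrow> real set" where
  "block a k = scaled_digit_set a (1 + block_pos k) (block_step k) k"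

definition G :: "real \<Rightarrow> real set" where
  "G a = (\<Union>k. block a k)"

lemma block_pos_pos: "0 < block_pos k"
  by (simp add: block_pos_def)

lemma block_pos_le: "block_pos k \<le> 1 / 2"
  by (simp add: block_pos_def power_le_one)

lemma block_pos_ratio: "k0 \<le> k1 \<Longrightarrow> block_pos k0 = 2 ^ (k1 - k0) * block_pos k1"
  by (simp add: block_pos_def power_one_over power_diff field_simps)

lemma block_step_pos: "0 < block_step k"
  by (simp add: block_step_def)

lemma block_width: "block_step k * 2 ^ k = (1 / 2) ^ (2 ^ (k + 3))"
  unfolding block_step_def by (simp add: power_add power_one_over)

lemma block_width_le: "block_step k * 2 ^ k \<le> block_pos k / 4"
proof -
  have "k + 3 \<le> 2 ^ (k + 3)" using less_exp[of "k + 3"] by simp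
  then have "(1 / 2 :: real) ^ (2 ^ (k + 3)) \<le> (1 / 2) ^ (k + 3)" by (intro power_decreasing) auto
  moreover have "(1 / 2 :: real) ^ (k + 3) = (1 / 2) ^ (k + 1) / 4"
    by (simp add: power_add eval_nat_numeral)
  ultimately show ?thesis unfolding block_width block_pos_def by simp
qed

lemma block_subset: "block a k \<subseteq> {1 + block_pos k..1 + block_pos k + block_step k * 2 ^ k}"
  using scaled_digit_set_subset[of "block_step k" a "1 + block_pos k" k] block_step_pos[of k]
  unfolding block_def by (force simp: right_diff_distrib)

lemma block_subset_near_pos: "block a k \<subseteq> {1 + block_pos k..1 + 5 / 4 * block_pos k}"
  using block_subset[of a k] block_width_le[of k] by force

lemma G_subset: "G a \<subseteq> {1..2}"
proof
  fix x assume "x \<in> G a"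
  then obtain k where "x \<in> block a k" unfolding G_def by blast
  then show "x \<in> {1..2}"
    using block_subset_near_pos[of a k] block_pos_pos[of k] block_pos_le[of k] by force
qed

lemma finite_block: "finite (block a k)"
  by (simp add: block_def scaled_digit_set_def finite_digit_set)

lemma card_block: "0 \<le> a \<Longrightarrow> a \<le> 1 \<Longrightarrow> card (block a k) = 2 ^ nat \<lfloor>real k * a\<rfloor>"
  unfolding block_def scaled_digit_set_def using block_step_pos[of k]
  by (subst card_image) (auto simp: inj_on_def card_digit_set)

lemma block_separated:
  assumes "x \<in> block a k" "y \<in> block a k" "x \<noteq> y"
  shows "block_step k \<le> \<bar>x - y\<bar>"
proof -
  obtain i j :: nat where "x = 1 + block_pos k + block_step k * real i"
    "y = 1 + block_pos k + block_step k * real j" "i \<noteq> j"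
    using assms unfolding block_def scaled_digit_set_def by auto
  moreover have "1 \<le> \<bar>real i - real j\<bar>" using \<open>i \<noteq> j\<close> by linarith
  ultimately show ?thesis
    using block_step_pos[of k] by (simp add: abs_mult flip: right_diff_distrib)
qed

definition large_blocks :: "real \<Rightarrow> nat set" where
  "large_blocks \<delta> = {k. \<delta> < 5 / 4 * block_pos k}"

lemma block_subset_if_not_large: "k \<notin> large_blocks \<delta> \<Longrightarrow> block a k \<subseteq> {1..1 + \<delta>}"
  using block_subset_near_pos[of a k] block_pos_pos[of k] unfolding large_blocks_def by force

lemma large_blocks_less_log:
  assumes "0 < \<delta>" "k \<in> large_blocks \<delta>"
  shows "real k < log 2 (1 / \<delta>)"
proof (rule less_log2_if_power_less[OF assms(1)])
  have "\<delta> < 5 / (8 * 2 ^ k)"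
    using assms(2) by (simp add: large_blocks_def block_pos_def power_one_over)
  then have "\<delta> * 2 ^ k < 1" by (simp add: field_simps)
  then show "2 ^ k < 1 / \<delta>" using assms(1) by (simp add: field_simps)
qed

lemma large_blocks_bound:
  assumes "0 < \<delta>" "\<delta> < 1"
  shows "finite (large_blocks \<delta>)" "real (card (large_blocks \<delta>)) \<le> 1 + log 2 (1 / \<delta>)"
proof -
  define L where "L = log 2 (1 / \<delta>)"
  have L: "0 < L" using assms by (simp add: L_def)
  have sub: "large_blocks \<delta> \<subseteq> {..<nat \<lceil>L\<rceil>}"
  proof
    fix k assume "k \<in> large_blocks \<delta>"
    then have "of_int (int k) < L" using large_blocks_less_log assms(1) by (simp add: L_def)
    then have "int k < \<lceil>L\<rceil>" by (simp only: less_ceiling_iff)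
    then show "k \<in> {..<nat \<lceil>L\<rceil>}" by simp
  qed
  then show "finite (large_blocks \<delta>)" by (rule finite_subset) simp
  have "card (large_blocks \<delta>) \<le> nat \<lceil>L\<rceil>" using card_mono[OF _ sub] by simp
  then show "real (card (large_blocks \<delta>)) \<le> 1 + log 2 (1 / \<delta>)"
    using L unfolding L_def[symmetric] by linarith
qed

lemma block_cover_log:
  assumes "0 \<le> a" "a \<le> 1" "0 < \<delta>" "\<delta> < 1"
  shows "\<exists>S. covers (block a k) \<delta> S \<and> real (card S) \<le> 1 + log 2 (1 / \<delta>)"
proof (cases "block_step k * 2 ^ k \<le> \<delta>")
  case True
  then have "covers (block a k) \<delta> {1 + block_pos k}"
    using block_subset[of a k] by (force simp: covers_def)
  then show ?thesis using assms(3,4) by (intro exI[of _ "{1 + block_pos k}"]) simp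
next
  case False
  have "covers (block a k) \<delta> (block a k)"
    using assms(3) finite_block by (force simp: covers_def)
  moreover have "real (card (block a k)) \<le> log 2 (1 / \<delta>)"
  proof -
    have "\<lfloor>real k * a\<rfloor> \<le> int k"
      using floor_mono[OF mult_left_le[of a "real k"]] assms(1,2) by simp
    then have "(2::real) ^ nat \<lfloor>real k * a\<rfloor> \<le> 2 ^ (k + 3)"
      by (intro power_increasing) (simp_all add: nat_le_iff)
    then have "real (card (block a k)) \<le> 2 ^ (k + 3)"
      using assms(1,2) by (simp add: card_block)
    moreover have pow: "(2::real) ^ (2 ^ (k + 3)) < 1 / \<delta>"
      using False assms(3) by (simp add: block_width power_one_over field_simps)
    have "(2::real) ^ (k + 3) < log 2 (1 / \<delta>)"
      using less_log2_if_power_less[OF assms(3) pow] by simp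
    ultimately show ?thesis by linarith
  qed
  ultimately show ?thesis by (intro exI[of _ "block a k"]) simp
qed

lemma box_counting_bound_G:
  assumes "0 \<le> \<alpha>" "\<alpha> \<le> 1" "0 < a"
  shows "box_counting_bound (G \<alpha>) a"
proof -
  define c where "c = 1 + 1 / (min 1 (a * ln 2 / 2)) ^ 2"
  have "real (cover_num (G \<alpha>) \<delta>) \<le> c * \<delta> powr (-a)" if \<delta>: "0 < \<delta>" "\<delta> < 1" for \<delta>
  proof -
    define L where "L = log 2 (1 / \<delta>)"
    have L: "0 < L" using \<delta> by (simp add: L_def)
    have sub: "G \<alpha> \<subseteq> {1..1 + \<delta>} \<union> (\<Union>k\<in>large_blocks \<delta>. block \<alpha> k)"
      using block_subset_if_not_large unfolding G_def by blast
    have cov: "\<exists>S. covers (block \<alpha> k) \<delta> S \<and> real (card S) \<le> 1 + L"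
      if "k \<in> large_blocks \<delta>" for k
      using block_cover_log[OF assms(1,2) \<delta>] by (simp add: L_def)
    have "real (cover_num (G \<alpha>) \<delta>) \<le> 1 + real (card (large_blocks \<delta>)) * (1 + L)"
      by (rule cover_num_Union_le[OF large_blocks_bound(1)[OF \<delta>] sub cov])
    also have "\<dots> \<le> 1 + (1 + L) ^ 2"
      using large_blocks_bound(2)[OF \<delta>] L
      by (simp add: L_def power2_eq_square mult_right_mono)
    also have "\<dots> \<le> c * exp (a * ln 2 * L)"
      unfolding c_def using one_plus_square_le_exp[of "a * ln 2" L] assms(3) L by simp
    also have "exp (a * ln 2 * L) = \<delta> powr (-a)"
      using \<delta> by (simp add: L_def log_def powr_def ln_div)
    finally show ?thesis .
  qed
  moreover have "0 < c" unfolding c_def by (simp add: add_pos_nonneg)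
  ultimately show ?thesis unfolding box_counting_bound_def by blast
qed

lemma card_blocks_meeting_le:
  assumes "finite K" "K \<subseteq> large_blocks \<delta>" "0 < \<delta>" "\<delta> < v - u"
    and meets: "\<And>k. k \<in> K \<Longrightarrow> block a k \<inter> {u..v} \<noteq> {}"
  shows "(2::real) ^ (card K - 1) \<le> 5 * ((v - u) / \<delta>)"
proof (cases "card K \<le> 1")
  case True
  then show ?thesis using assms(3,4) by simp
next
  case False
  define k0 where "k0 = Min K"
  define k1 where "k1 = Max K"
  have "K \<noteq> {}" using False by auto
  then have K: "k0 \<in> K" "k1 \<in> K"
    using Min_in Max_in assms(1) unfolding k0_def k1_def by auto
  have "K \<subseteq> {k0..k1}" using Min_le Max_ge assms(1) unfolding k0_def k1_def by auto
  then have "card K \<le> card {k0..k1}" by (intro card_mono) simp_all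
  then have "card K - 1 \<le> k1 - k0" "k0 < k1" using False by auto
  obtain x0 x1 where x: "x0 \<in> block a k0" "x1 \<in> block a k1" "x0 \<in> {u..v}" "x1 \<in> {u..v}"
    using meets K(1,2) by blast
  have ratio: "block_pos k0 = 2 ^ (k1 - k0) * block_pos k1"
    using \<open>k0 < k1\<close> by (simp add: block_pos_ratio)
  have "(2::real) \<le> 2 ^ (k1 - k0)"
    using power_increasing[of 1 "k1 - k0" "2::real"] \<open>k0 < k1\<close> by simp
  then have "2 * block_pos k1 \<le> 2 ^ (k1 - k0) * block_pos k1"
    by (rule mult_right_mono) (simp add: less_imp_le[OF block_pos_pos])
  moreover have "1 + block_pos k0 \<le> x0" "x1 \<le> 1 + 5 / 4 * block_pos k1"
    using x block_subset_near_pos by force+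
  ultimately have gap: "3 / 8 * block_pos k0 \<le> v - u" using x ratio by auto
  have "4 / 5 * \<delta> < block_pos k1"
    using K(2) assms(2) by (auto simp: large_blocks_def)
  then have "(2::real) ^ (k1 - k0) * (4 / 5 * \<delta>) \<le> 2 ^ (k1 - k0) * block_pos k1"
    by (intro mult_left_mono) simp_all
  also have "\<dots> \<le> 8 / 3 * (v - u)" using gap ratio by simp
  finally have "(2::real) ^ (k1 - k0) \<le> 10 / 3 * ((v - u) / \<delta>)"
    using assms(3) by (simp add: field_simps)
  moreover have "(2::real) ^ (card K - 1) \<le> 2 ^ (k1 - k0)"
    using \<open>card K - 1 \<le> k1 - k0\<close> by (intro power_increasing) auto
  moreover have "0 \<le> (v - u) / \<delta>" using assms(3,4) by simp
  ultimately show ?thesis by linarith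
qed

lemma assouad_bound_G:
  assumes "0 \<le> \<alpha>" "\<alpha> \<le> 1" "\<alpha> < a"
  shows "assouad_bound (G \<alpha>) a"
proof -
  define b where "b = a - \<alpha>"
  define C where "C = 1 + 5 powr b / (b * ln 2)"
  define c where "c = 1 + 32 * C"
  have b: "0 < b" "0 < C" using assms(3) by (simp_all add: b_def C_def add_pos_nonneg)
  have "real (cover_num (G \<alpha> \<inter> {u..v}) \<delta>) \<le> c * \<delta> powr (-a) * (v - u) powr a"
    if uv: "1 \<le> u" "u < v" "v \<le> 2" "0 < \<delta>" "\<delta> < v - u" for u v \<delta>
  proof -
    define x where "x = (v - u) / \<delta>"
    have x: "1 < x" "1 \<le> x powr a" using uv assms by (auto simp: x_def intro: ge_one_powr_ge_zero)
    define K where "K = {k \<in> large_blocks \<delta>. block \<alpha> k \<inter> {u..v} \<noteq> {}}"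
    have fin: "finite K"
      using large_blocks_bound(1)[of \<delta>] uv unfolding K_def by auto
    have "K \<subseteq> large_blocks \<delta>" "\<And>k. k \<in> K \<Longrightarrow> block \<alpha> k \<inter> {u..v} \<noteq> {}"
      unfolding K_def by auto
    then have "(2::real) ^ (card K - 1) \<le> 5 * x"
      unfolding x_def by (rule card_blocks_meeting_le[OF fin _ uv(4,5)])
    then have card_K: "real (card K) \<le> C * x powr b"
      using real_le_powr_if_power_le[OF b(1) _ less_imp_le[OF x(1)]] unfolding C_def by simp
    have sub: "G \<alpha> \<inter> {u..v} \<subseteq> {1..1 + \<delta>} \<union> (\<Union>k\<in>K. block \<alpha> k \<inter> {u..v})"
      using block_subset_if_not_large unfolding G_def K_def by blast
    have cov: "\<exists>S. covers (block \<alpha> k \<inter> {u..v}) \<delta> S \<and> real (card S) \<le> 32 * x powr \<alpha>"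
      if "k \<in> K" for k
      unfolding block_def x_def
      by (rule scaled_digit_set_cover[OF assms(1,2) block_step_pos uv(4,5)])
    have "real (cover_num (G \<alpha> \<inter> {u..v}) \<delta>) \<le> 1 + real (card K) * (32 * x powr \<alpha>)"
      by (rule cover_num_Union_le[OF fin sub cov])
    also have "\<dots> \<le> 1 + C * x powr b * (32 * x powr \<alpha>)"
      using card_K by (simp add: mult_right_mono)
    also have "\<dots> = 1 + 32 * C * x powr a"
      using x(1) by (simp add: b_def mult_ac flip: powr_add)
    also have "\<dots> \<le> c * x powr a" using x(2) by (simp add: c_def algebra_simps)
    also have "x powr a = \<delta> powr (-a) * (v - u) powr a"
      using uv by (simp add: x_def powr_divide powr_minus_divide)
    finally show ?thesis by (simp add: mult_ac)
  qed
  moreover have "0 < c" using b by (simp add: c_def)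
  ultimately show ?thesis unfolding assouad_bound_def by blast
qed

lemma card_block_le_cover_num:
  "card (block a k)
    \<le> cover_num (G a \<inter> {1 + block_pos k..1 + block_pos k + block_step k * 2 ^ k}) (block_step k / 2)"
proof (rule card_le_cover_num_if_separated)
  show "block a k \<subseteq> G a \<inter> {1 + block_pos k..1 + block_pos k + block_step k * 2 ^ k}"
    using block_subset[of a k] unfolding G_def by blast
  show "block_step k / 2 < \<bar>x - y\<bar>" if "x \<in> block a k" "y \<in> block a k" "x \<noteq> y" for x y
    using block_separated[OF that] block_step_pos[of k] by linarith
qed (use block_step_pos[of k] in auto)

lemma assouad_bound_G_imp_le:
  assumes "0 \<le> \<alpha>" "\<alpha> \<le> 1" "assouad_bound (G \<alpha>) a"
  shows "\<alpha> \<le> a"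
proof (rule ccontr)
  assume "\<not> \<alpha> \<le> a"
  obtain c where c: "0 < c" and bound: "\<And>u v \<delta>. 1 \<le> u \<Longrightarrow> u < v \<Longrightarrow> v \<le> 2 \<Longrightarrow> 0 < \<delta> \<Longrightarrow>
      \<delta> < v - u \<Longrightarrow> real (cover_num (G \<alpha> \<inter> {u..v}) \<delta>) \<le> c * \<delta> powr (-a) * (v - u) powr a"
    using assms(3) unfolding assouad_bound_def by blast
  have "1 < 2 powr (\<alpha> - a)" using \<open>\<not> \<alpha> \<le> a\<close> by simp
  then obtain k :: nat where k: "2 * c * 2 powr a < (2 powr (\<alpha> - a)) ^ k"
    using real_arch_pow by blast
  define u where "u = 1 + block_pos k"
  define v where "v = u + block_step k * 2 ^ k"
  define \<delta> where "\<delta> = block_step k / 2"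
  have "block_step k * 1 \<le> block_step k * 2 ^ k"
    using block_step_pos[of k] by (intro mult_left_mono) simp_all
  then have "1 \<le> u" "v \<le> 2" "0 < \<delta>" "\<delta> < v - u" "u < v"
    using block_pos_pos[of k] block_pos_le[of k] block_width_le[of k] block_step_pos[of k]
    unfolding u_def v_def \<delta>_def by linarith+
  have "card (block \<alpha> k) \<le> cover_num (G \<alpha> \<inter> {u..v}) \<delta>"
    unfolding u_def v_def \<delta>_def by (rule card_block_le_cover_num)
  then have "real (card (block \<alpha> k)) \<le> c * ((v - u) / \<delta>) powr a"
    using bound[OF \<open>1 \<le> u\<close> \<open>u < v\<close> \<open>v \<le> 2\<close> \<open>0 < \<delta>\<close> \<open>\<delta> < v - u\<close>] \<open>0 < \<delta>\<close> \<open>u < v\<close>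
    by (simp add: powr_divide powr_minus_divide)
  also have "(v - u) / \<delta> = 2 * 2 ^ k"
    using block_step_pos[of k] by (simp add: u_def v_def \<delta>_def)
  also have "c * (2 * 2 ^ k) powr a = c * 2 powr a * (2 powr a) ^ k"
    by (simp add: powr_mult powr_power powr_realpow[symmetric] powr_powr mult_ac)
  finally have upper: "real (card (block \<alpha> k)) \<le> c * 2 powr a * (2 powr a) ^ k" .
  have "(2 powr \<alpha>) ^ k / 2 = 2 powr (real k * \<alpha> - 1)"
    by (simp add: powr_power powr_diff)
  also have "\<dots> \<le> 2 powr real (nat \<lfloor>real k * \<alpha>\<rfloor>)"
    using assms(1) by (intro powr_mono) linarith+
  also have "\<dots> = real (card (block \<alpha> k))"
    using assms(1,2) by (subst powr_realpow) (simp_all add: card_block)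
  finally have "(2 powr (\<alpha> - a)) ^ k * (2 powr a) ^ k \<le> 2 * c * 2 powr a * (2 powr a) ^ k"
    using upper by (simp add: powr_diff power_divide field_simps)
  then show False using k by simp
qed

theorem lemma6p2:
  fixes \<alpha> :: real
  assumes "0 \<le> \<alpha>" and "\<alpha> \<le> 1"
  shows "\<exists>G. G \<subseteq> {1..2} \<and> dim_M G = 0 \<and> dim_A G = \<alpha>"
proof (intro exI conjI)
  show "G \<alpha> \<subseteq> {1..2}" by (rule G_subset)
  show "dim_M (G \<alpha>) = 0"
    unfolding dim_M_eq_Inf using box_counting_bound_G[OF assms]
    by (intro Inf_eq_if_greaterThan_subset) auto
  show "dim_A (G \<alpha>) = \<alpha>"
    unfolding dim_A_eq_Inf using assouad_bound_G[OF assms] assouad_bound_G_imp_le[OF assms] assms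
    by (intro Inf_eq_if_greaterThan_subset) force+
qed

end
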